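(* Let $m,n\in\mathbb{N}$ be coprime with $1\le m\le n-1$, and let $\Gamma$ be a $\mathbb{D}_n$-symmetric billiard curve with equivariant parametrization $\gamma$. Let $Z_i=\gamma(X_i)$ be a $\mathbb{D}_n$-symmetric, Birkhoff, $n$-periodic billiard orbit of rotation number $\frac mn$. Let $(p,q)=s(n,m)$ with $s\in\mathbb{N}$, so that $X\in\mathbb{X}_{n,m}\subset\mathbb{X}_{p,q}$. Consider the Hessian of $$W_{p,q}(x_1,\dots,x_p)=\sum_{j=1}^{p-1}L(x_j,x_{j+1})+L(x_p,x_1+q)$$ at $(X_1,\dots,X_p)$. Then: - The Hessian is the symmetric tridiagonal circulant $p\times p$ matrix with diagonal entries $2\alpha$, and entries $\beta$ on the sub- and superdiagonals and in the two corners $(1,p),(p,1)$. Here $\alpha=\partial_{2,2}L(X_{i-1},X_i)=\partial_{1,1}L(X_i,X_{i+1})$ and $\beta=\partial_{1,2}L(X_i,X_{i+1})$ are independent of $i$. - For every $N\in\mathbb{Z}$, the vectors $v_i=\sin(2\pi Ni/p)$ and $w_i=\cos(2\pi Ni/p)$ ($i=1,\dots,p$) are eigenvectors with eigenvalue $2\alpha+2\beta\cos(2\pi N/p)$. - If $\gamma$ has constant speed $\|\gamma'\|\equiv c$, then $$\alpha=c^2\sin(m\pi/n)\Big(\frac{\sin(m\pi/n)}{L}-\kappa\Big),\qquad \beta=\frac{c^2\sin^2(m\pi/n)}{L},$$ where $L=\|Z_{i+1}-Z_i\|$ and $\kappa=\kappa(Z_i)$ (both independent of $i$).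
   Context: $\mathbb{D}_n=\langle R,S\rangle$, where $R$ is rotation by $2\pi/n$ and $S$ is the horizontal reflection. $\Gamma$ is a $C^2$ simple closed $\mathbb{D}_n$-invariant curve bounding a strictly convex domain, parametrized counterclockwise by a $1$-periodic $C^2$ immersion $\gamma$ descending to an embedding of $\mathbb{R}/\mathbb{Z}$, with $\gamma(x+1/n)=R\gamma(x)$ and $\gamma(-x)=S\gamma(x)$. $L(x,X)=\|\gamma(x)-\gamma(X)\|$, $\mathbb{X}_{p,q}=\{x:x_{i+p}=x_i+q\}$, and $\kappa$ is curvature. A billiard orbit satisfies the reflection law at each point, with lift $X$ ($\gamma(X_i)=Z_i$, $0<X_{i+1}-X_i<1$). $\mathbb{D}_n$-symmetric means each $g\in\mathbb{D}_n$ maps $Z_i$ to $Z_{k+i}$ for all $i$, or to $Z_{k-i}$ for all $i$, for some $k$. Birkhoff means $X_i\le X_j+l\Rightarrow X_{i+m}\le X_{j+m}+l$ for all integers. *)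

theory Defs
  imports "HOL-Complex_Analysis.Complex_Analysis"
begin

text \<open>The plane is modelled as the complex numbers. R = rotation by 2 pi/n,
  S = reflection in the horizontal axis (complex conjugation).\<close>

definition rotR :: "nat \<Rightarrow> complex \<Rightarrow> complex" where
  "rotR n z = cis (2 * pi / real n) * z"

definition reflS :: "complex \<Rightarrow> complex" where
  "reflS z = cnj z"

definition dihedral :: "nat \<Rightarrow> (complex \<Rightarrow> complex) set" where
  "dihedral n = {(\<lambda>z. cis (2 * pi * real_of_int j / real n) * z) | j :: int. True}
              \<union> {(\<lambda>z. cis (2 * pi * real_of_int j / real n) * cnj z) | j :: int. True}"

definition strictly_convex_domain :: "complex set \<Rightarrow> bool" where
  "strictly_convex_domain \<Omega> \<longleftrightarrow> open \<Omega> \<and> bounded \<Omega> \<and> \<Omega> \<noteq> {} \<and> convex \<Omega> \<and>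
     (\<forall>x\<in>closure \<Omega>. \<forall>y\<in>closure \<Omega>. x \<noteq> y \<longrightarrow> open_segment x y \<subseteq> \<Omega>)"

text \<open>gamma is a 1-periodic C^2 immersion (with derivatives gamma1, gamma2) descending to an
  embedding of R/Z, D_n-equivariant, whose image bounds a strictly convex domain and which
  runs counterclockwise (winding number 1 around interior points).\<close>
definition Dn_billiard_param ::
  "nat \<Rightarrow> (real \<Rightarrow> complex) \<Rightarrow> (real \<Rightarrow> complex) \<Rightarrow> (real \<Rightarrow> complex) \<Rightarrow> bool" where
  "Dn_billiard_param n \<gamma> \<gamma>1 \<gamma>2 \<longleftrightarrow>
     (\<forall>x. (\<gamma> has_vector_derivative \<gamma>1 x) (at x)) \<and>
     (\<forall>x. (\<gamma>1 has_vector_derivative \<gamma>2 x) (at x)) \<and>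
     continuous_on UNIV \<gamma>2 \<and>
     (\<forall>x. \<gamma>1 x \<noteq> 0) \<and>
     (\<forall>x y. \<gamma> x = \<gamma> y \<longleftrightarrow> (\<exists>k::int. x - y = real_of_int k)) \<and>
     (\<exists>\<Omega>. strictly_convex_domain \<Omega> \<and> frontier \<Omega> = range \<gamma> \<and>
          (\<forall>z\<in>\<Omega>. winding_number \<gamma> z = 1)) \<and>
     (\<forall>x. \<gamma> (x + 1 / real n) = rotR n (\<gamma> x)) \<and>
     (\<forall>x. \<gamma> (- x) = reflS (\<gamma> x))"

definition Lfun :: "(real \<Rightarrow> complex) \<Rightarrow> real \<Rightarrow> real \<Rightarrow> real" where
  "Lfun \<gamma> x y = cmod (\<gamma> x - \<gamma> y)"

definition curvature :: "(real \<Rightarrow> complex) \<Rightarrow> (real \<Rightarrow> complex) \<Rightarrow> real \<Rightarrow> real" where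
  "curvature \<gamma>1 \<gamma>2 x = Im (cnj (\<gamma>1 x) * \<gamma>2 x) / cmod (\<gamma>1 x) ^ 3"

definition XX :: "int \<Rightarrow> real \<Rightarrow> (int \<Rightarrow> real) set" where
  "XX p q = {x. \<forall>i. x (i + p) = x i + q}"

text \<open>Billiard orbit Z with lift X: reflection law at every point (equal tangential
  components of incoming and outgoing unit directions).\<close>
definition billiard_orbit ::
  "(real \<Rightarrow> complex) \<Rightarrow> (real \<Rightarrow> complex) \<Rightarrow> (int \<Rightarrow> complex) \<Rightarrow> (int \<Rightarrow> real) \<Rightarrow> bool" where
  "billiard_orbit \<gamma> \<gamma>1 Z X \<longleftrightarrow>
     (\<forall>i. \<gamma> (X i) = Z i) \<and>
     (\<forall>i. 0 < X (i + 1) - X i \<and> X (i + 1) - X i < 1) \<and>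
     (\<forall>i. sgn (Z i - Z (i - 1)) \<bullet> \<gamma>1 (X i) = sgn (Z (i + 1) - Z i) \<bullet> \<gamma>1 (X i))"

definition Dn_symmetric_orbit :: "nat \<Rightarrow> (int \<Rightarrow> complex) \<Rightarrow> bool" where
  "Dn_symmetric_orbit n Z \<longleftrightarrow>
     (\<forall>g\<in>dihedral n. \<exists>k::int. (\<forall>i. g (Z i) = Z (k + i)) \<or> (\<forall>i. g (Z i) = Z (k - i)))"

definition birkhoff :: "(int \<Rightarrow> real) \<Rightarrow> bool" where
  "birkhoff X \<longleftrightarrow> (\<forall>i j l m :: int. X i \<le> X j + real_of_int l \<longrightarrow> X (i + m) \<le> X (j + m) + real_of_int l)"

text \<open>The generating function W_{p,q}, on vectors indexed by 1..p.\<close>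
definition Wpq :: "(real \<Rightarrow> complex) \<Rightarrow> nat \<Rightarrow> real \<Rightarrow> (nat \<Rightarrow> real) \<Rightarrow> real" where
  "Wpq \<gamma> p q x = (\<Sum>j = 1..p - 1. Lfun \<gamma> (x j) (x (j + 1))) + Lfun \<gamma> (x p) (x 1 + q)"

definition partial :: "((nat \<Rightarrow> real) \<Rightarrow> real) \<Rightarrow> nat \<Rightarrow> (nat \<Rightarrow> real) \<Rightarrow> real" where
  "partial f b y = deriv (\<lambda>t. f (y(b := t))) (y b)"

text \<open>Symmetric tridiagonal circulant p x p matrix (entries indexed 1..p): 2 alpha on the
  diagonal, beta at positions (a,b) with b = a+1 or b = a-1 modulo p (this includes the corners
  (1,p),(p,1); for p = 2 the two contributions add).\<close>
definition circ_matrix :: "nat \<Rightarrow> real \<Rightarrow> real \<Rightarrow> nat \<Rightarrow> nat \<Rightarrow> real" where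
  "circ_matrix p \<alpha> \<beta> a b =
     (if a = b then 2 * \<alpha> else 0)
     + (if (a + 1) mod p = b mod p then \<beta> else 0)
     + (if (b + 1) mod p = a mod p then \<beta> else 0)"

end

theory Submission
  imports Defs
begin

text \<open>The dihedral symmetry forces the lift of a symmetric Birkhoff orbit to be an arithmetic
  progression \<open>X i = X 0 + i m / n\<close> with \<open>2 X 0 + m / n \<in> \<int> / n\<close>. So every chord
  \<open>(X i, X (i + 1))\<close> is the image of \<open>(X 0, X 1)\<close> under a rotation, and a reflection reverses
  \<open>(X 0, X 1)\<close>. The second derivatives of \<open>L\<close> are invariant under these isometries, hence
  \<open>\<partial>\<^sub>1\<^sub>1L = \<partial>\<^sub>2\<^sub>2L = \<alpha>\<close> and \<open>\<partial>\<^sub>1\<^sub>2L = \<beta>\<close> all along the orbit. As \<open>W\<^sub>p\<^sub>,\<^sub>q\<close> is a cyclic sum of \<open>L\<close> over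
  consecutive coordinates, its Hessian is the tridiagonal circulant matrix, whose eigenvectors
  are the discrete Fourier modes.

  For constant speed \<open>c\<close>, the point \<open>Z 0\<close> lies on an axis of symmetry, so its tangent is
  orthogonal to the radius, and the acceleration is normal. Then \<open>\<alpha>\<close> and \<open>\<beta>\<close> reduce to
  trigonometry of the chord from \<open>z\<close> to \<open>e\<^sup>2\<^sup>\<pi>\<^sup>i\<^sup>m\<^sup>/\<^sup>n z\<close>; the sign of the tangential velocity
  comes from the counterclockwise orientation, read off the winding number around the centre \<open>0\<close>
  of the convex domain.\<close>

section \<open>Derivatives of the chord length\<close>

lemma has_vector_derivative_inner:
  fixes f h :: "real \<Rightarrow> 'a::real_inner"
  assumes "(f has_vector_derivative f') (at t)" and "(h has_vector_derivative h') (at t)"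
  shows "((\<lambda>t. f t \<bullet> h t) has_real_derivative f' \<bullet> h t + f t \<bullet> h') (at t)"
  using has_derivative_inner[OF assms[unfolded has_vector_derivative_def]]
  unfolding has_field_derivative_def
  by (rule has_derivative_eq_rhs) (simp add: fun_eq_iff algebra_simps)

lemma has_vector_derivative_norm:
  fixes f :: "real \<Rightarrow> 'a::real_inner"
  assumes "(f has_vector_derivative f') (at t)" and "f t \<noteq> 0"
  shows "((\<lambda>t. norm (f t)) has_real_derivative (f t \<bullet> f') / norm (f t)) (at t)"
  using has_derivative_compose[OF assms(1)[unfolded has_vector_derivative_def] has_derivative_norm[OF assms(2)]]
  unfolding has_field_derivative_def
  by (rule has_derivative_eq_rhs) (simp add: fun_eq_iff sgn_div_norm inner_commute divide_inverse)

lemma has_vector_derivative_affine_comp: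
  assumes "(f has_vector_derivative f') (at (a + k * t))"
  shows "((\<lambda>t. f (a + k * t)) has_vector_derivative k *\<^sub>R f') (at t)"
proof -
  have "((\<lambda>t. a + k * t) has_vector_derivative k) (at t)"
    by (auto simp: has_real_derivative_iff_has_vector_derivative[symmetric] intro!: derivative_eq_intros)
  from vector_diff_chain_at[OF this assms] show ?thesis by (simp add: o_def)
qed

lemma L_d1_derivative_identity:
  fixes d u v h :: "'a::real_inner"
  assumes "d \<noteq> 0"
  shows "(((k *\<^sub>R u - l *\<^sub>R v) \<bullet> u + d \<bullet> (k *\<^sub>R h)) * norm d
           - (d \<bullet> u) * ((d \<bullet> (k *\<^sub>R u - l *\<^sub>R v)) / norm d)) / (norm d * norm d)
    = k * ((u \<bullet> u + d \<bullet> h) / norm d - (d \<bullet> u)\<^sup>2 / norm d ^ 3)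
      + l * (- (u \<bullet> v) / norm d - (d \<bullet> u) * (- d \<bullet> v) / norm d ^ 3)"
  unfolding inner_simps inner_minus_left inner_minus_right inner_commute[of v u]
  using assms by (simp add: field_simps power2_eq_square power3_eq_cube)

lemma L_d2_derivative_identity:
  fixes d u v h :: "'a::real_inner"
  assumes "d \<noteq> 0"
  shows "(((l *\<^sub>R v - k *\<^sub>R u) \<bullet> v + - d \<bullet> (l *\<^sub>R h)) * norm d
           - (- d \<bullet> v) * ((d \<bullet> (k *\<^sub>R u - l *\<^sub>R v)) / norm d)) / (norm d * norm d)
    = k * (- (u \<bullet> v) / norm d - (d \<bullet> u) * (- d \<bullet> v) / norm d ^ 3)
      + l * ((v \<bullet> v + - d \<bullet> h) / norm d - (- d \<bullet> v)\<^sup>2 / norm d ^ 3)"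
  unfolding inner_simps inner_minus_left inner_minus_right inner_commute[of v u]
  using assms by (simp add: field_simps power2_eq_square power3_eq_cube)

locale C2_curve =
  fixes g g1 g2 :: "real \<Rightarrow> 'a::real_inner"
  assumes has_derivative_g: "\<And>x. (g has_vector_derivative g1 x) (at x)"
      and has_derivative_g1: "\<And>x. (g1 has_vector_derivative g2 x) (at x)"
begin

text \<open>Closed forms of the partial derivatives \<open>\<partial>\<^sub>iL\<close>, \<open>\<partial>\<^sub>i\<^sub>jL\<close> of \<open>L x y = \<parallel>g x - g y\<parallel>\<close>; they are the
  derivatives only where \<open>g x \<noteq> g y\<close>.\<close>

definition L_d1 :: "real \<Rightarrow> real \<Rightarrow> real" where
  "L_d1 x y = ((g x - g y) \<bullet> g1 x) / norm (g x - g y)"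

definition L_d2 :: "real \<Rightarrow> real \<Rightarrow> real" where
  "L_d2 x y = ((g y - g x) \<bullet> g1 y) / norm (g x - g y)"

definition L_d11 :: "real \<Rightarrow> real \<Rightarrow> real" where
  "L_d11 x y = (g1 x \<bullet> g1 x + (g x - g y) \<bullet> g2 x) / norm (g x - g y)
     - ((g x - g y) \<bullet> g1 x)^2 / norm (g x - g y)^3"

definition L_d22 :: "real \<Rightarrow> real \<Rightarrow> real" where
  "L_d22 x y = (g1 y \<bullet> g1 y + (g y - g x) \<bullet> g2 y) / norm (g x - g y)
     - ((g y - g x) \<bullet> g1 y)^2 / norm (g x - g y)^3"

definition L_d12 :: "real \<Rightarrow> real \<Rightarrow> real" where
  "L_d12 x y = - (g1 x \<bullet> g1 y) / norm (g x - g y)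
     - ((g x - g y) \<bullet> g1 x) * ((g y - g x) \<bullet> g1 y) / norm (g x - g y)^3"

lemma continuous_on_g: "continuous_on UNIV g"
  using has_derivative_g by (intro continuous_on_vector_derivative) auto

lemma continuous_on_g1: "continuous_on UNIV g1"
  using has_derivative_g1 by (intro continuous_on_vector_derivative) auto

lemma open_chord_nondegenerate: "open {t. g (a + k * t) \<noteq> g (b + l * t)}"
  by (intro open_Collect_neq continuous_on_compose2[OF continuous_on_g] continuous_intros) auto

lemma has_vector_derivative_chord:
  "((\<lambda>t. g (a + k * t) - g (b + l * t)) has_vector_derivative
      k *\<^sub>R g1 (a + k * t) - l *\<^sub>R g1 (b + l * t)) (at t)"
  by (intro has_vector_derivative_diff has_vector_derivative_affine_comp has_derivative_g)

lemma has_real_derivative_chord_length: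
  assumes "g (a + k * t) \<noteq> g (b + l * t)"
  shows "((\<lambda>t. norm (g (a + k * t) - g (b + l * t))) has_real_derivative
           k * L_d1 (a + k * t) (b + l * t) + l * L_d2 (a + k * t) (b + l * t)) (at t)"
proof -
  have "((\<lambda>t. norm (g (a + k * t) - g (b + l * t))) has_real_derivative
      (g (a + k * t) - g (b + l * t)) \<bullet> (k *\<^sub>R g1 (a + k * t) - l *\<^sub>R g1 (b + l * t))
        / norm (g (a + k * t) - g (b + l * t))) (at t)"
    using assms by (intro has_vector_derivative_norm has_vector_derivative_chord) simp
  then show ?thesis
    by (simp add: L_d1_def L_d2_def norm_minus_commute add_divide_distrib
        diff_divide_distrib inner_commute algebra_simps)
qed

lemma has_real_derivative_L_d1:
  assumes "g (a + k * t) \<noteq> g (b + l * t)"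
  shows "((\<lambda>t. L_d1 (a + k * t) (b + l * t)) has_real_derivative
           k * L_d11 (a + k * t) (b + l * t) + l * L_d12 (a + k * t) (b + l * t)) (at t)"
proof -
  let ?u = "a + k * t" and ?w = "b + l * t"
  let ?d = "g ?u - g ?w" and ?d' = "k *\<^sub>R g1 ?u - l *\<^sub>R g1 ?w"
  have "((\<lambda>t. (g (a + k * t) - g (b + l * t)) \<bullet> g1 (a + k * t)) has_real_derivative
      ?d' \<bullet> g1 ?u + ?d \<bullet> (k *\<^sub>R g2 ?u)) (at t)"
    by (intro has_vector_derivative_inner has_vector_derivative_chord
        has_vector_derivative_affine_comp has_derivative_g1)
  moreover have "((\<lambda>t. norm (g (a + k * t) - g (b + l * t))) has_real_derivative
      (?d \<bullet> ?d') / norm ?d) (at t)"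
    using assms by (intro has_vector_derivative_norm has_vector_derivative_chord) simp
  moreover have "?d \<noteq> 0" using assms by simp
  ultimately have "((\<lambda>t. L_d1 (a + k * t) (b + l * t)) has_real_derivative
      ((?d' \<bullet> g1 ?u + ?d \<bullet> (k *\<^sub>R g2 ?u)) * norm ?d - (?d \<bullet> g1 ?u) * ((?d \<bullet> ?d') / norm ?d))
        / (norm ?d * norm ?d)) (at t)"
    unfolding L_d1_def by (intro DERIV_divide) simp_all
  then show ?thesis
    by (rule DERIV_cong) (unfold L_d11_def L_d12_def,
        rule L_d1_derivative_identity[OF \<open>?d \<noteq> 0\<close>, unfolded minus_diff_eq])
qed

lemma has_real_derivative_L_d2:
  assumes "g (a + k * t) \<noteq> g (b + l * t)"
  shows "((\<lambda>t. L_d2 (a + k * t) (b + l * t)) has_real_derivative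
           k * L_d12 (a + k * t) (b + l * t) + l * L_d22 (a + k * t) (b + l * t)) (at t)"
proof -
  let ?u = "a + k * t" and ?w = "b + l * t"
  let ?d = "g ?u - g ?w" and ?d' = "k *\<^sub>R g1 ?u - l *\<^sub>R g1 ?w"
  have "((\<lambda>t. (g (b + l * t) - g (a + k * t)) \<bullet> g1 (b + l * t)) has_real_derivative
      (l *\<^sub>R g1 ?w - k *\<^sub>R g1 ?u) \<bullet> g1 ?w + (g ?w - g ?u) \<bullet> (l *\<^sub>R g2 ?w)) (at t)"
    by (intro has_vector_derivative_inner has_vector_derivative_chord
        has_vector_derivative_affine_comp has_derivative_g1)
  moreover have "((\<lambda>t. norm (g (a + k * t) - g (b + l * t))) has_real_derivative
      (?d \<bullet> ?d') / norm ?d) (at t)"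
    using assms by (intro has_vector_derivative_norm has_vector_derivative_chord) simp
  moreover have "?d \<noteq> 0" using assms by simp
  ultimately have "((\<lambda>t. L_d2 (a + k * t) (b + l * t)) has_real_derivative
      (((l *\<^sub>R g1 ?w - k *\<^sub>R g1 ?u) \<bullet> g1 ?w + (g ?w - g ?u) \<bullet> (l *\<^sub>R g2 ?w)) * norm ?d
        - ((g ?w - g ?u) \<bullet> g1 ?w) * ((?d \<bullet> ?d') / norm ?d)) / (norm ?d * norm ?d)) (at t)"
    unfolding L_d2_def by (intro DERIV_divide) simp_all
  then show ?thesis
    by (rule DERIV_cong) (unfold L_d22_def L_d12_def,
        rule L_d2_derivative_identity[OF \<open>?d \<noteq> 0\<close>, unfolded minus_diff_eq])
qed

lemma constant_speed_orthogonal: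
  assumes "\<And>x. norm (g1 x) = c"
  shows "g1 x \<bullet> g2 x = 0"
proof -
  have "((\<lambda>x. g1 x \<bullet> g1 x) has_real_derivative g2 x \<bullet> g1 x + g1 x \<bullet> g2 x) (at x)"
    by (intro has_vector_derivative_inner has_derivative_g1)
  moreover have "(\<lambda>x. g1 x \<bullet> g1 x) = (\<lambda>x. c\<^sup>2)"
    using assms by (simp add: power2_norm_eq_inner[symmetric])
  ultimately have "g2 x \<bullet> g1 x + g1 x \<bullet> g2 x = 0"
    using DERIV_const DERIV_unique by metis
  then show ?thesis by (simp add: inner_commute)
qed

end

section \<open>Dihedral symmetry of the curve\<close>

lemma vector_derivative_affine_equivariant:
  fixes f f' :: "real \<Rightarrow> complex"
  assumes "\<And>x. (f has_vector_derivative f' x) (at x)" and "\<And>x. f (a + k * x) = w * f x"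
  shows "k *\<^sub>R f' (a + k * x) = w * f' x"
proof (rule vector_derivative_unique_at)
  show "((\<lambda>x. f (a + k * x)) has_vector_derivative k *\<^sub>R f' (a + k * x)) (at x)"
    by (rule has_vector_derivative_affine_comp[OF assms(1)])
  show "((\<lambda>x. f (a + k * x)) has_vector_derivative w * f' x) (at x)"
    unfolding assms(2) by (rule has_vector_derivative_mult_right[OF assms(1)])
qed

lemma vector_derivative_affine_antiequivariant:
  fixes f f' :: "real \<Rightarrow> complex"
  assumes "\<And>x. (f has_vector_derivative f' x) (at x)" and "\<And>x. f (a + k * x) = w * cnj (f x)"
  shows "k *\<^sub>R f' (a + k * x) = w * cnj (f' x)"
proof (rule vector_derivative_unique_at)
  show "((\<lambda>x. f (a + k * x)) has_vector_derivative k *\<^sub>R f' (a + k * x)) (at x)"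
    by (rule has_vector_derivative_affine_comp[OF assms(1)])
  show "((\<lambda>x. f (a + k * x)) has_vector_derivative w * cnj (f' x)) (at x)"
    unfolding assms(2) by (intro has_vector_derivative_mult_right has_vector_derivative_cnj assms(1))
qed

lemma inner_complex_eq_Re_cnj_mult: "a \<bullet> b = Re (cnj a * b)"
  by (simp add: inner_complex_def)

lemma inner_mult_unit:
  fixes u a b :: complex
  assumes "cmod u = 1"
  shows "(u * a) \<bullet> (u * b) = a \<bullet> b"
proof -
  have "cnj u * u = 1"
    using complex_norm_square[of u] assms by (simp add: mult.commute)
  then have "cnj (u * a) * (u * b) = cnj a * b"
    by (metis complex_cnj_mult mult.assoc mult.left_commute mult_1)
  then show ?thesis by (simp only: inner_complex_eq_Re_cnj_mult)
qed

lemma inner_cnj_cnj: "cnj a \<bullet> cnj b = a \<bullet> b"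
  by (simp add: inner_complex_def)

locale plane_C2_curve = C2_curve g g1 g2 for g g1 g2 :: "real \<Rightarrow> complex"

locale dihedral_curve = plane_C2_curve +
  fixes n :: nat
  assumes n_ge_2: "2 \<le> n"
    and g_eq_iff: "\<And>x y. g x = g y \<longleftrightarrow> (\<exists>k::int. x - y = of_int k)"
    and g_rotate: "\<And>x. g (x + 1 / real n) = rotR n (g x)"
    and g_reflect: "\<And>x. g (- x) = reflS (g x)"
begin

definition rot :: "int \<Rightarrow> complex" where
  "rot j = cis (2 * pi * of_int j / real n)"

lemma norm_rot [simp]: "cmod (rot j) = 1"
  by (simp add: rot_def)

lemma cnj_rot_mult_rot [simp]: "cnj (rot j) * rot j = 1"
  by (simp add: rot_def cis_cnj cis_mult)

lemma g_shift_nat: "g (x + real k / real n) = rot (int k) * g x"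
proof (induction k arbitrary: x)
  case 0
  then show ?case by (simp add: rot_def)
next
  case (Suc k)
  have "g (x + real (Suc k) / real n) = g ((x + real k / real n) + 1 / real n)"
    by (simp add: add_divide_distrib ac_simps)
  also have "\<dots> = cis (2 * pi / real n) * (rot (int k) * g x)"
    by (simp only: g_rotate rotR_def Suc.IH)
  also have "\<dots> = rot (int (Suc k)) * g x"
    by (simp add: rot_def cis_mult add_divide_distrib distrib_left)
  finally show ?case .
qed

lemma g_shift: "g (x + of_int j / real n) = rot j * g x"
proof (cases "j \<ge> 0")
  case True
  then show ?thesis using g_shift_nat[of x "nat j"] by simp
next
  case False
  have "g x = rot (- j) * g (x + of_int j / real n)"
    using g_shift_nat[of "x + of_int j / real n" "nat (- j)"] False by simp
  then show ?thesis
    by (simp add: rot_def cis_mult flip: cis_divide)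
qed

lemma g1_shift: "g1 (x + of_int j / real n) = rot j * g1 x"
  using vector_derivative_affine_equivariant[OF has_derivative_g, of "of_int j / real n" 1 "rot j" x]
  by (simp add: g_shift add.commute)

lemma g2_shift: "g2 (x + of_int j / real n) = rot j * g2 x"
  using vector_derivative_affine_equivariant[OF has_derivative_g1, of "of_int j / real n" 1 "rot j" x]
  by (simp add: g1_shift add.commute)

lemma g_reflect_shift: "g (of_int j / real n - x) = rot j * cnj (g x)"
  using g_shift[of "- x" j] g_reflect[of x] by (simp add: reflS_def)

lemma g1_reflect_shift: "g1 (of_int j / real n - x) = - (rot j * cnj (g1 x))"
  using vector_derivative_affine_antiequivariant[OF has_derivative_g, of "of_int j / real n" "-1" "rot j" x]
  by (simp add: g_reflect_shift equation_minus_iff)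

lemma g2_reflect_shift: "g2 (of_int j / real n - x) = rot j * cnj (g2 x)"
  using vector_derivative_affine_antiequivariant[OF has_derivative_g1, of "of_int j / real n" "-1" "- rot j" x]
  by (simp add: g1_reflect_shift)

lemma inverse_n_bounds: "0 < 1 / real n" "1 / real n < 1"
  using n_ge_2 by (auto simp: field_simps)

lemma g_rotate_neq: "g (x + 1 / real n) \<noteq> g x"
proof
  assume "g (x + 1 / real n) = g x"
  then obtain k :: int where "1 / real n = of_int k" using g_eq_iff[of "x + 1 / real n" x] by auto
  then have "real_of_int 0 < real_of_int k" "real_of_int k < real_of_int 1"
    using inverse_n_bounds by simp_all
  then show False unfolding of_int_less_iff by linarith
qed

lemma g_nonzero: "g x \<noteq> 0"
  using g_rotate[of x] g_rotate_neq[of x] by (auto simp: rotR_def)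

lemma rot_1_neq_1: "rot 1 \<noteq> 1"
  using g_rotate[of 0] g_rotate_neq[of 0] by (auto simp: rotR_def rot_def)

lemma sum_rot_eq_0: "(\<Sum>j<n. rot (int j)) = 0"
proof -
  have "rot (int j) = rot 1 ^ j" for j
    unfolding rot_def Complex.DeMoivre by (simp add: ac_simps)
  moreover have "rot 1 ^ n = 1"
    unfolding rot_def Complex.DeMoivre using n_ge_2 by simp
  ultimately show ?thesis
    using geometric_sum[OF rot_1_neq_1, of n] by simp
qed

lemma chord_shift: "g (x + of_int j / real n) - g (y + of_int j / real n) = rot j * (g x - g y)"
  by (simp add: g_shift algebra_simps)

lemma L_d11_shift: "L_d11 (x + of_int j / real n) (y + of_int j / real n) = L_d11 x y"
  unfolding L_d11_def chord_shift g1_shift g2_shift inner_mult_unit[OF norm_rot] norm_mult norm_rot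
    mult_1_left ..

lemma L_d12_shift: "L_d12 (x + of_int j / real n) (y + of_int j / real n) = L_d12 x y"
  unfolding L_d12_def chord_shift g1_shift inner_mult_unit[OF norm_rot] norm_mult norm_rot
    mult_1_left ..

lemma L_d22_shift: "L_d22 (x + of_int j / real n) (y + of_int j / real n) = L_d22 x y"
  unfolding L_d22_def chord_shift g1_shift g2_shift inner_mult_unit[OF norm_rot] norm_mult norm_rot
    mult_1_left ..

lemma L_d22_reflect: "L_d22 (of_int j / real n - y) (of_int j / real n - x) = L_d11 x y"
proof -
  have chord: "g (of_int j / real n - x) - g (of_int j / real n - y) = rot j * cnj (g x - g y)"
    by (simp add: g_reflect_shift algebra_simps)
  have "cmod (g (of_int j / real n - y) - g (of_int j / real n - x)) = cmod (g x - g y)"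
    by (metis chord norm_minus_commute norm_mult norm_rot mult_1 complex_mod_cnj)
  then show ?thesis
    unfolding L_d22_def L_d11_def chord g1_reflect_shift g2_reflect_shift inner_minus_left
      inner_minus_right inner_mult_unit[OF norm_rot] by (simp add: inner_cnj_cnj flip: complex_cnj_diff)
qed

end

section \<open>Symmetric Birkhoff orbits are arithmetic progressions\<close>

lemma XX_shift:
  assumes "X \<in> XX p q"
  shows "X (i + p * t) = X i + of_int t * q"
proof -
  have nat_shift: "X (i + p * int k) = X i + real k * q" for i k
  proof (induction k)
    case (Suc k)
    have "X (i + p * int (Suc k)) = X ((i + p * int k) + p)" by (simp add: algebra_simps)
    also have "\<dots> = X (i + p * int k) + q" using assms by (simp add: XX_def)
    finally show ?case using Suc by (simp add: algebra_simps)
  qed simp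
  show ?thesis
  proof (cases "t \<ge> 0")
    case True
    then show ?thesis using nat_shift[of i "nat t"] by simp
  next
    case False
    then show ?thesis using nat_shift[of "i + p * t" "nat (- t)"] by simp
  qed
qed

context dihedral_curve
begin

lemma rotR_in_dihedral: "rotR n \<in> dihedral n"
  unfolding dihedral_def by (rule UnI1, rule CollectI, rule exI[of _ 1]) (auto simp: rotR_def fun_eq_iff)

lemma reflS_in_dihedral: "reflS \<in> dihedral n"
  unfolding dihedral_def by (rule UnI2, rule CollectI, rule exI[of _ 0]) (auto simp: reflS_def fun_eq_iff)

lemma rotation_shifts_orbit:
  assumes gX: "\<And>i. g (X i) = Z i" and sym: "Dn_symmetric_orbit n Z" and X: "X \<in> XX (int n) (real m)"
  obtains k where "\<And>i. rotR n (Z i) = Z (k + i)"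
proof -
  have Z_periodic: "Z (i + int n * t) = Z i" for i t
    using g_eq_iff[of "X (i + int n * t)" "X i"] gX XX_shift[OF X] by (metis add_diff_cancel_left' of_int_mult of_int_of_nat_eq)
  obtain k where k: "(\<forall>i. rotR n (Z i) = Z (k + i)) \<or> (\<forall>i. rotR n (Z i) = Z (k - i))"
    using sym rotR_in_dihedral unfolding Dn_symmetric_orbit_def by blast
  show thesis
  proof (cases "\<forall>i. rotR n (Z i) = Z (k + i)")
    case True
    then show thesis using that by blast
  next
    case False
    with k have rev: "\<And>i. rotR n (Z i) = Z (k - i)" by blast
    \<comment> \<open>then \<open>R\<^sup>2\<close> fixes \<open>Z 0\<close>, which forces \<open>n = 2\<close>; and for \<open>n = 2\<close> reversal is a shift\<close>
    have "g (X 0 + 2 / real n) = rotR n (rotR n (Z 0))"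
      using g_rotate[of "X 0"] g_rotate[of "X 0 + 1 / real n"] gX[of 0] by (simp add: add.assoc)
    also have "\<dots> = Z 0" using rev[of 0] rev[of k] by simp
    finally obtain l :: int where "2 / real n = of_int l"
      using g_eq_iff[of "X 0 + 2 / real n" "X 0"] gX[of 0] by auto
    then have "n = 2"
    proof (rule contrapos_pp)
      assume "n \<noteq> 2"
      then have "0 < 2 / real n" "2 / real n < 1" using n_ge_2 by (auto simp: field_simps)
      then show "2 / real n \<noteq> of_int l" by (metis not_less of_int_0_less_iff of_int_less_1_iff zless_imp_add1_zle add_0)
    qed
    have "rotR n (Z i) = Z (k + i)" for i
      using rev[of i] Z_periodic[of "k + i" "- i"] by (simp add: \<open>n = 2\<close> algebra_simps)
    then show thesis using that by blast
  qed
qed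

lemma birkhoff_rotation_step:
  assumes gX: "\<And>i. g (X i) = Z i" and bir: "birkhoff X" and k: "\<And>i. rotR n (Z i) = Z (k + i)"
  obtains l :: int where "\<And>i. X (k + i) = X i + 1 / real n + of_int l"
proof -
  have lifts: "\<exists>l::int. X (k + i) = X i + 1 / real n + of_int l" for i
  proof -
    have "g (X (k + i)) = g (X i + 1 / real n)" using gX k g_rotate by metis
    then obtain l :: int where "X (k + i) - (X i + 1 / real n) = of_int l" using g_eq_iff by blast
    then show ?thesis by (intro exI[of _ l]) simp
  qed
  then obtain l :: int where l: "X k = X 0 + 1 / real n + of_int l" by (metis add_0_right)
  \<comment> \<open>the Birkhoff order condition forbids the integer part from depending on \<open>i\<close>\<close>
  have "X (k + i) = X i + 1 / real n + of_int l" for i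
  proof -
    obtain li :: int where li: "X (k + i) = X i + 1 / real n + of_int li"
      using lifts by blast
    have "X k \<le> X 0 + real_of_int (l + 1)" using l inverse_n_bounds by simp
    then have "X (k + i) \<le> X (0 + i) + real_of_int (l + 1)" using bir unfolding birkhoff_def by blast
    then have "real_of_int li < real_of_int (l + 1)" using li inverse_n_bounds unfolding add_0 by linarith
    then have "li \<le> l" by linarith
    have "X 0 \<le> X k + real_of_int (- l)" using l inverse_n_bounds by simp
    then have "X (0 + i) \<le> X (k + i) + real_of_int (- l)" using bir unfolding birkhoff_def by blast
    then have "real_of_int l < real_of_int (li + 1)" using li inverse_n_bounds unfolding add_0 by linarith
    then have "l \<le> li" by linarith
    with \<open>li \<le> l\<close> show ?thesis using li by simp
  qed
  then show thesis using that by blast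
qed

lemma orbit_lift_linear:
  assumes X: "X \<in> XX (int n) (real m)" and step: "\<And>i. X (k + i) = X i + 1 / real n + of_int l"
  shows "X i = X 0 + of_int i * real m / real n"
proof -
  have iter: "X (int t * k + i) = X i + real t / real n + real t * of_int l" for t i
  proof (induction t)
    case (Suc t)
    have "X (int (Suc t) * k + i) = X (k + (int t * k + i))" by (simp add: algebra_simps)
    also have "\<dots> = X (int t * k + i) + 1 / real n + of_int l" by (rule step)
    finally show ?case using Suc by (simp add: add_divide_distrib algebra_simps)
  qed simp
  \<comment> \<open>comparing \<open>n\<close> rotation steps with the period relation gives \<open>k m = 1 + n l\<close>\<close>
  have "X (0 + int n * k) = X 0 + 1 + real n * of_int l"
    using iter[of n 0] n_ge_2 by (simp add: mult.commute)
  then have "of_int (k * int m) = (of_int (1 + int n * l) :: real)"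
    using XX_shift[OF X, of 0 k] by simp
  then have km: "k * int m = 1 + int n * l" by (simp only: of_int_eq_iff)
  have X_step: "X (i + 1) = X i + real m / real n" for i
  proof -
    have "X ((i + 1) + int n * l) = X (int m * k + i)" using km by (simp add: algebra_simps)
    then show ?thesis using iter[of m i] XX_shift[OF X, of "i + 1" l] by (simp add: algebra_simps)
  qed
  show ?thesis
  proof (induction i rule: int_induct[where k = 0])
    case (step1 i)
    then show ?case using X_step[of i] by (simp add: add_divide_distrib algebra_simps)
  next
    case (step2 i)
    then show ?case using X_step[of "i - 1"] by (simp add: diff_divide_distrib algebra_simps)
  qed simp
qed

lemma reflection_fixes_orbit_midpoint:
  assumes gX: "\<And>i. g (X i) = Z i" and sym: "Dn_symmetric_orbit n Z"
    and lin: "\<And>i. X i = X 0 + of_int i * real m / real n"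
  obtains J :: int where "2 * X 0 + real m / real n = of_int J / real n"
proof -
  obtain k where "(\<forall>i. reflS (Z i) = Z (k + i)) \<or> (\<forall>i. reflS (Z i) = Z (k - i))"
    using sym reflS_in_dihedral unfolding Dn_symmetric_orbit_def by blast
  then have "g (- X 0) = g (X k)" using g_reflect gX by (metis add_0_right diff_zero)
  then obtain l :: int where "- X 0 - X k = of_int l" using g_eq_iff by blast
  then have "2 * X 0 + real m / real n = of_int (int m - k * int m - l * int n) / real n"
    using lin[of k] n_ge_2 by (simp add: field_simps)
  then show thesis using that by blast
qed

lemma symmetric_birkhoff_orbit:
  assumes gX: "\<And>i. g (X i) = Z i" and sym: "Dn_symmetric_orbit n Z"
    and bir: "birkhoff X" and X: "X \<in> XX (int n) (real m)"
  obtains J :: int where "\<And>i. X i = X 0 + of_int i * real m / real n"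
    and "2 * X 0 + real m / real n = of_int J / real n"
proof -
  obtain k where "\<And>i. rotR n (Z i) = Z (k + i)" using rotation_shifts_orbit[OF gX sym X] by blast
  then obtain l where "\<And>i. X (k + i) = X i + 1 / real n + of_int l"
    using birkhoff_rotation_step[OF gX bir] by blast
  then have lin: "\<And>i. X i = X 0 + of_int i * real m / real n" using orbit_lift_linear[OF X] by blast
  then show thesis using reflection_fixes_orbit_midpoint[OF gX sym lin] that by blast
qed

end

section \<open>Tridiagonal circulant matrices\<close>

definition cyc_succ :: "nat \<Rightarrow> nat \<Rightarrow> nat" where
  "cyc_succ p j = (if j = p then 1 else Suc j)"

lemma cyc_succ_in: "j \<in> {1..p} \<Longrightarrow> cyc_succ p j \<in> {1..p}"
  by (auto simp: cyc_succ_def)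

lemma cyc_succ_eq_iff_mod:
  assumes "a \<in> {1..p}" and "b \<in> {1..p}"
  shows "cyc_succ p a = b \<longleftrightarrow> (a + 1) mod p = b mod p"
proof (cases "a = p")
  case True
  have "b mod p = (if b = p then 0 else b)" using assms by auto
  moreover have "(a + 1) mod p = 1 mod p" using True by (simp add: mod_Suc)
  ultimately show ?thesis using True assms by (cases "p = 1") (auto simp: cyc_succ_def)
next
  case False
  then have "(a + 1) mod p = (if a + 1 = p then 0 else a + 1)" using assms by auto
  moreover have "b mod p = (if b = p then 0 else b)" using assms by auto
  ultimately show ?thesis using False assms by (auto simp: cyc_succ_def)
qed

definition cyc_pred :: "nat \<Rightarrow> nat \<Rightarrow> nat" where
  "cyc_pred p j = (if j = 1 then p else j - 1)"

lemma cyc_pred_in: "j \<in> {1..p} \<Longrightarrow> cyc_pred p j \<in> {1..p}"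
  by (auto simp: cyc_pred_def)

lemma cyc_succ_cyc_pred: "j \<in> {1..p} \<Longrightarrow> cyc_succ p (cyc_pred p j) = j"
  by (auto simp: cyc_succ_def cyc_pred_def)

lemma cyc_pred_eq_iff: "a \<in> {1..p} \<Longrightarrow> b \<in> {1..p} \<Longrightarrow> cyc_pred p b = a \<longleftrightarrow> cyc_succ p a = b"
  by (auto simp: cyc_succ_def cyc_pred_def)

lemma sum_of_bool_cyc_succ_eq:
  fixes f :: "nat \<Rightarrow> real"
  assumes "b \<in> {1..p}"
  shows "(\<Sum>j = 1..p. of_bool (cyc_succ p j = b) * f j) = f (cyc_pred p b)"
proof -
  have "(\<Sum>j = 1..p. of_bool (cyc_succ p j = b) * f j) = (\<Sum>j = 1..p. if j = cyc_pred p b then f j else 0)"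
  proof (intro sum.cong refl)
    fix j assume "j \<in> {1..p}"
    then show "of_bool (cyc_succ p j = b) * f j = (if j = cyc_pred p b then f j else 0)"
      using cyc_pred_eq_iff[OF _ assms, of j] by auto
  qed
  also have "\<dots> = f (cyc_pred p b)"
    using cyc_pred_in[OF assms] by (subst sum.delta) auto
  finally show ?thesis .
qed

lemma sum_cyclic_tridiagonal_eq_circ_matrix:
  fixes A B :: real
  assumes a: "a \<in> {1..p}" and b: "b \<in> {1..p}"
  shows "(\<Sum>j = 1..p. of_bool (j = b) * (of_bool (j = a) * A + of_bool (cyc_succ p j = a) * B)
            + of_bool (cyc_succ p j = b) * (of_bool (j = a) * B + of_bool (cyc_succ p j = a) * A))
         = circ_matrix p A B a b"
proof -
  have "(\<Sum>j = 1..p. of_bool (j = b) * (of_bool (j = a) * A + of_bool (cyc_succ p j = a) * B))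
      = of_bool (b = a) * A + of_bool (cyc_succ p b = a) * B"
    using b by (simp add: of_bool_def if_distrib[of "\<lambda>x. x * _"] sum.delta cong: if_cong)
  moreover have "(\<Sum>j = 1..p. of_bool (cyc_succ p j = b) * (of_bool (j = a) * B + of_bool (cyc_succ p j = a) * A))
      = of_bool (cyc_succ p a = b) * B + of_bool (b = a) * A"
    using sum_of_bool_cyc_succ_eq[OF b] cyc_pred_eq_iff[OF a b] cyc_succ_cyc_pred[OF b] by simp
  ultimately show ?thesis
    using cyc_succ_eq_iff_mod[OF a b] cyc_succ_eq_iff_mod[OF b a]
    by (auto simp: sum.distrib circ_matrix_def)
qed

lemma circ_matrix_row_sum:
  fixes f :: "nat \<Rightarrow> real"
  assumes a: "a \<in> {1..p}"
  shows "(\<Sum>b = 1..p. circ_matrix p \<alpha> \<beta> a b * f b)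
         = 2 * \<alpha> * f a + \<beta> * f (cyc_succ p a) + \<beta> * f (cyc_pred p a)"
proof -
  have "(\<Sum>b = 1..p. circ_matrix p \<alpha> \<beta> a b * f b)
      = (\<Sum>b = 1..p. (if a = b then 2 * \<alpha> * f b else 0) + (if cyc_succ p a = b then \<beta> * f b else 0)
                     + (if cyc_pred p a = b then \<beta> * f b else 0))"
  proof (intro sum.cong refl)
    fix b assume b: "b \<in> {1..p}"
    show "circ_matrix p \<alpha> \<beta> a b * f b = (if a = b then 2 * \<alpha> * f b else 0)
        + (if cyc_succ p a = b then \<beta> * f b else 0) + (if cyc_pred p a = b then \<beta> * f b else 0)"
      unfolding circ_matrix_def cyc_succ_eq_iff_mod[OF a b, symmetric]
        cyc_succ_eq_iff_mod[OF b a, symmetric] cyc_pred_eq_iff[OF b a, symmetric]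
      by (simp add: distrib_right)
  qed
  also have "\<dots> = 2 * \<alpha> * f a + \<beta> * f (cyc_succ p a) + \<beta> * f (cyc_pred p a)"
    using a cyc_succ_in[OF a] cyc_pred_in[OF a] by (simp add: sum.distrib)
  finally show ?thesis .
qed

lemma circ_matrix_trig_eigenvectors:
  fixes \<alpha> \<beta> :: real and N :: int
  assumes a: "a \<in> {1..p}"
  defines "\<mu> \<equiv> 2 * \<alpha> + 2 * \<beta> * cos (2 * pi * real_of_int N / real p)"
  shows "(\<Sum>b = 1..p. circ_matrix p \<alpha> \<beta> a b * sin (2 * pi * real_of_int N * real b / real p))
           = \<mu> * sin (2 * pi * real_of_int N * real a / real p)"
    and "(\<Sum>b = 1..p. circ_matrix p \<alpha> \<beta> a b * cos (2 * pi * real_of_int N * real b / real p))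
           = \<mu> * cos (2 * pi * real_of_int N * real a / real p)"
proof -
  define x where "x = 2 * pi * real_of_int N * real a / real p"
  define h where "h = 2 * pi * real_of_int N / real p"
  have p: "real p > 0" using a by simp
  \<comment> \<open>the cyclic neighbours of \<open>a\<close> sit at angles \<open>x \<plusminus> h\<close> up to a multiple of \<open>2 \<pi>\<close>\<close>
  have succ: "2 * pi * real_of_int N * real (cyc_succ p a) / real p
      = (x + h) + (2 * pi) * of_int (- of_bool (a = p) * N)"
    using p by (auto simp: cyc_succ_def x_def h_def field_simps)
  have pred: "2 * pi * real_of_int N * real (cyc_pred p a) / real p
      = (x - h) + (2 * pi) * of_int (of_bool (a = 1) * N)"
    using p a by (auto simp: cyc_pred_def x_def h_def field_simps of_nat_diff)
  have periodic: "sin (y + (2 * pi) * of_int k) = sin y" "cos (y + (2 * pi) * of_int k) = cos y" for y k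
    by (simp_all only: sin_add cos_add cos_int_2pin sin_int_2pin mult_1_right mult_0_right
        add_0_right diff_0_right)
  show "(\<Sum>b = 1..p. circ_matrix p \<alpha> \<beta> a b * sin (2 * pi * real_of_int N * real b / real p))
      = \<mu> * sin (2 * pi * real_of_int N * real a / real p)"
    unfolding circ_matrix_row_sum[OF a] succ pred periodic x_def[symmetric] \<mu>_def h_def[symmetric]
    by (simp add: sin_add sin_diff algebra_simps)
  show "(\<Sum>b = 1..p. circ_matrix p \<alpha> \<beta> a b * cos (2 * pi * real_of_int N * real b / real p))
      = \<mu> * cos (2 * pi * real_of_int N * real a / real p)"
    unfolding circ_matrix_row_sum[OF a] succ pred periodic x_def[symmetric] \<mu>_def h_def[symmetric]
    by (simp add: cos_add cos_diff algebra_simps)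
qed

section \<open>The Hessian of \<open>W\<^sub>p\<^sub>,\<^sub>q\<close>\<close>

definition cyc_next :: "nat \<Rightarrow> real \<Rightarrow> (nat \<Rightarrow> real) \<Rightarrow> nat \<Rightarrow> real" where
  "cyc_next p q y j = y (cyc_succ p j) + (if j = p then q else 0)"

lemma fun_upd_affine: "(y(a := t)) j = (if j = a then 0 else y j) + of_bool (j = a) * (t :: real)"
  by auto

lemma cyc_next_fun_upd_affine:
  "cyc_next p q (y(a := t)) j =
     (if cyc_succ p j = a then 0 else y (cyc_succ p j)) + (if j = p then q else 0)
     + of_bool (cyc_succ p j = a) * t"
  by (simp add: cyc_next_def)

lemma Wpq_eq_sum_cyc_next:
  assumes "1 \<le> p"
  shows "Wpq g p q y = (\<Sum>j = 1..p. Lfun g (y j) (cyc_next p q y j))"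
proof -
  obtain r where r: "p = Suc r" using assms by (cases p) auto
  have "(\<Sum>j = 1..p. Lfun g (y j) (cyc_next p q y j))
      = (\<Sum>j = 1..r. Lfun g (y j) (y (j + 1))) + Lfun g (y p) (y 1 + q)"
    unfolding r by (simp add: cyc_next_def cyc_succ_def)
  then show ?thesis unfolding Wpq_def r by simp
qed

context plane_C2_curve
begin

lemma has_real_derivative_L_d1_L_d2:
  assumes "g (a + k * t) \<noteq> g (b + l * t)"
  shows "((\<lambda>t. c * L_d1 (a + k * t) (b + l * t) + d * L_d2 (a + k * t) (b + l * t)) has_real_derivative
           c * (k * L_d11 (a + k * t) (b + l * t) + l * L_d12 (a + k * t) (b + l * t))
         + d * (k * L_d12 (a + k * t) (b + l * t) + l * L_d22 (a + k * t) (b + l * t))) (at t)"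
  by (intro DERIV_add DERIV_cmult has_real_derivative_L_d1 has_real_derivative_L_d2 assms)

text \<open>The coordinate \<open>y b\<close> is the first point of the \<open>b\<close>-th chord and the second point of the
  chord before it; the weights \<open>of_bool\<close> pick out these two terms.\<close>

definition Wpq_gradient :: "nat \<Rightarrow> real \<Rightarrow> nat \<Rightarrow> (nat \<Rightarrow> real) \<Rightarrow> real" where
  "Wpq_gradient p q b y = (\<Sum>j = 1..p.
     of_bool (j = b) * L_d1 (y j) (cyc_next p q y j)
     + of_bool (cyc_succ p j = b) * L_d2 (y j) (cyc_next p q y j))"

definition Wpq_hessian :: "nat \<Rightarrow> real \<Rightarrow> nat \<Rightarrow> nat \<Rightarrow> (nat \<Rightarrow> real) \<Rightarrow> real" where
  "Wpq_hessian p q a b y = (\<Sum>j = 1..p.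
     of_bool (j = b) * (of_bool (j = a) * L_d11 (y j) (cyc_next p q y j)
                        + of_bool (cyc_succ p j = a) * L_d12 (y j) (cyc_next p q y j))
     + of_bool (cyc_succ p j = b) * (of_bool (j = a) * L_d12 (y j) (cyc_next p q y j)
                        + of_bool (cyc_succ p j = a) * L_d22 (y j) (cyc_next p q y j)))"

lemma partial_Wpq_eq_gradient:
  assumes p: "1 \<le> p" and "b \<in> {1..p}"
    and nondeg: "\<And>j. j \<in> {1..p} \<Longrightarrow> g (y j) \<noteq> g (cyc_next p q y j)"
  shows "partial (Wpq g p q) b y = Wpq_gradient p q b y"
proof -
  have "((\<lambda>t. Wpq g p q (y(b := t))) has_real_derivative Wpq_gradient p q b y) (at (y b))"
    unfolding Wpq_eq_sum_cyc_next[OF p] Wpq_gradient_def Lfun_def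
    unfolding cyc_next_fun_upd_affine[of p q y b] fun_upd_affine[of y b]
  proof (intro DERIV_sum)
    fix j assume "j \<in> {1..p}"
    have pt1: "(if j = b then 0 else y j) + of_bool (j = b) * y b = y j" by simp
    have pt2: "(if cyc_succ p j = b then 0 else y (cyc_succ p j)) + (if j = p then q else 0)
        + of_bool (cyc_succ p j = b) * y b = cyc_next p q y j"
      by (simp add: cyc_next_def)
    show "((\<lambda>t. cmod (g ((if j = b then 0 else y j) + of_bool (j = b) * t)
                         - g ((if cyc_succ p j = b then 0 else y (cyc_succ p j)) + (if j = p then q else 0)
                              + of_bool (cyc_succ p j = b) * t)))
             has_real_derivative
               of_bool (j = b) * L_d1 (y j) (cyc_next p q y j)
               + of_bool (cyc_succ p j = b) * L_d2 (y j) (cyc_next p q y j)) (at (y b))"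
      using has_real_derivative_chord_length[of "if j = b then 0 else y j" "of_bool (j = b)" "y b"
          "(if cyc_succ p j = b then 0 else y (cyc_succ p j)) + (if j = p then q else 0)"
          "of_bool (cyc_succ p j = b)", unfolded pt1 pt2] nondeg[OF \<open>j \<in> {1..p}\<close>]
      by blast
  qed
  then show ?thesis unfolding partial_def by (rule DERIV_imp_deriv)
qed

lemma has_real_derivative_Wpq_gradient:
  assumes "a \<in> {1..p}"
    and nondeg: "\<And>j. j \<in> {1..p} \<Longrightarrow> g (y j) \<noteq> g (cyc_next p q y j)"
  shows "((\<lambda>t. Wpq_gradient p q b (y(a := t))) has_real_derivative Wpq_hessian p q a b y) (at (y a))"
  unfolding Wpq_gradient_def Wpq_hessian_def cyc_next_fun_upd_affine[of p q y a] fun_upd_affine[of y a]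
proof (rule DERIV_sum)
  fix j assume "j \<in> {1..p}"
  have pt1: "(if j = a then 0 else y j) + of_bool (j = a) * y a = y j" by simp
  have pt2: "(if cyc_succ p j = a then 0 else y (cyc_succ p j)) + (if j = p then q else 0)
      + of_bool (cyc_succ p j = a) * y a = cyc_next p q y j"
    by (simp add: cyc_next_def)
  show "((\<lambda>t. of_bool (j = b) * L_d1 ((if j = a then 0 else y j) + of_bool (j = a) * t)
             ((if cyc_succ p j = a then 0 else y (cyc_succ p j)) + (if j = p then q else 0)
               + of_bool (cyc_succ p j = a) * t)
           + of_bool (cyc_succ p j = b) * L_d2 ((if j = a then 0 else y j) + of_bool (j = a) * t)
             ((if cyc_succ p j = a then 0 else y (cyc_succ p j)) + (if j = p then q else 0)
               + of_bool (cyc_succ p j = a) * t))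
      has_real_derivative
        of_bool (j = b) * (of_bool (j = a) * L_d11 (y j) (cyc_next p q y j)
                           + of_bool (cyc_succ p j = a) * L_d12 (y j) (cyc_next p q y j))
        + of_bool (cyc_succ p j = b) * (of_bool (j = a) * L_d12 (y j) (cyc_next p q y j)
                           + of_bool (cyc_succ p j = a) * L_d22 (y j) (cyc_next p q y j))) (at (y a))"
    by (rule has_real_derivative_L_d1_L_d2[of "if j = a then 0 else y j" "of_bool (j = a)" "y a"
        "(if cyc_succ p j = a then 0 else y (cyc_succ p j)) + (if j = p then q else 0)"
        "of_bool (cyc_succ p j = a)" "of_bool (j = b)" "of_bool (cyc_succ p j = b)",
        unfolded pt1 pt2, OF nondeg[OF \<open>j \<in> {1..p}\<close>]])
qed

lemma has_real_derivative_partial_Wpq: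
  assumes p: "1 \<le> p" and a: "a \<in> {1..p}" and b: "b \<in> {1..p}"
    and nondeg: "\<And>j. j \<in> {1..p} \<Longrightarrow> g (y j) \<noteq> g (cyc_next p q y j)"
  shows "((\<lambda>t. partial (Wpq g p q) b (y(a := t))) has_real_derivative Wpq_hessian p q a b y) (at (y a))"
proof (rule has_field_derivative_transform_within_open)
  define S where "S = {t. \<forall>j\<in>{1..p}. g ((y(a := t)) j) \<noteq> g (cyc_next p q (y(a := t)) j)}"
  have "S = (\<Inter>j\<in>{1..p}. {t. g ((if j = a then 0 else y j) + of_bool (j = a) * t)
      \<noteq> g ((if cyc_succ p j = a then 0 else y (cyc_succ p j)) + (if j = p then q else 0)
           + of_bool (cyc_succ p j = a) * t)})"
    unfolding S_def cyc_next_fun_upd_affine fun_upd_affine by blast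
  then show "open S" by (simp add: open_INT open_chord_nondegenerate)
  show "y a \<in> S" using nondeg by (simp add: S_def)
  show "((\<lambda>t. Wpq_gradient p q b (y(a := t))) has_real_derivative Wpq_hessian p q a b y) (at (y a))"
    using a nondeg by (rule has_real_derivative_Wpq_gradient)
  show "Wpq_gradient p q b (y(a := t)) = partial (Wpq g p q) b (y(a := t))" if "t \<in> S" for t
  proof (rule partial_Wpq_eq_gradient[symmetric, OF p b])
    show "g ((y(a := t)) j) \<noteq> g (cyc_next p q (y(a := t)) j)" if "j \<in> {1..p}" for j
      using \<open>t \<in> S\<close> that unfolding S_def by blast
  qed
qed

lemma has_real_derivative_deriv_Lfun_right:
  assumes "g a \<noteq> g t"
  shows "((\<lambda>t. deriv (\<lambda>u. Lfun g a u) t) has_real_derivative L_d22 a t) (at t)"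
proof (rule has_field_derivative_transform_within_open)
  show "(L_d2 a has_real_derivative L_d22 a t) (at t)"
    using has_real_derivative_L_d2[of a 0 t 0 1] assms by simp
  show "open {s. g a \<noteq> g s}" using open_chord_nondegenerate[of a 0 0 1] by simp
  show "t \<in> {s. g a \<noteq> g s}" using assms by simp
  show "L_d2 a s = deriv (\<lambda>u. Lfun g a u) s" if "s \<in> {s. g a \<noteq> g s}" for s
    using has_real_derivative_chord_length[of a 0 s 0 1] that
    by (simp add: Lfun_def DERIV_imp_deriv)
qed

lemma has_real_derivative_deriv_Lfun_left:
  assumes "g t \<noteq> g b"
  shows "((\<lambda>t. deriv (\<lambda>u. Lfun g u b) t) has_real_derivative L_d11 t b) (at t)"
proof (rule has_field_derivative_transform_within_open)
  show "((\<lambda>s. L_d1 s b) has_real_derivative L_d11 t b) (at t)"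
    using has_real_derivative_L_d1[of 0 1 t b 0] assms by simp
  show "open {s. g s \<noteq> g b}" using open_chord_nondegenerate[of 0 1 b 0] by simp
  show "t \<in> {s. g s \<noteq> g b}" using assms by simp
  show "L_d1 s b = deriv (\<lambda>u. Lfun g u b) s" if "s \<in> {s. g s \<noteq> g b}" for s
    using has_real_derivative_chord_length[of 0 1 s b 0] that
    by (simp add: Lfun_def DERIV_imp_deriv)
qed

lemma has_real_derivative_deriv_Lfun_mixed:
  assumes "g a \<noteq> g t"
  shows "((\<lambda>t. deriv (\<lambda>u. Lfun g u t) a) has_real_derivative L_d12 a t) (at t)"
proof (rule has_field_derivative_transform_within_open)
  show "(L_d1 a has_real_derivative L_d12 a t) (at t)"
    using has_real_derivative_L_d1[of a 0 t 0 1] assms by simp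
  show "open {s. g a \<noteq> g s}" using open_chord_nondegenerate[of a 0 0 1] by simp
  show "t \<in> {s. g a \<noteq> g s}" using assms by simp
  show "L_d1 a s = deriv (\<lambda>u. Lfun g u s) a" if "s \<in> {s. g a \<noteq> g s}" for s
    using has_real_derivative_chord_length[of 0 1 a s 0] that
    by (simp add: Lfun_def DERIV_imp_deriv)
qed

end

section \<open>Second derivatives along a symmetric orbit\<close>

locale symmetric_orbit = dihedral_curve +
  fixes X :: "int \<Rightarrow> real" and m :: nat and J :: int
  assumes X_linear: "\<And>i. X i = X 0 + of_int i * real m / real n"
    and X_midpoint: "2 * X 0 + real m / real n = of_int J / real n"
    and m_pos: "0 < m" and m_less_n: "m < n"
begin

definition alpha :: real where "alpha = L_d11 (X 0) (X 1)"

definition beta :: real where "beta = L_d12 (X 0) (X 1)"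

lemma X_eq_shift: "X i = X 0 + of_int (i * int m) / real n"
  using X_linear[of i] by simp

lemma X_Suc_eq_shift: "X (i + 1) = X 1 + of_int (i * int m) / real n"
  using X_linear[of "i + 1"] X_linear[of 1] by (simp add: add_divide_distrib distrib_right)

lemma X_step: "X (i + 1) = X i + real m / real n"
  using X_linear[of "i + 1"] X_linear[of i] by (simp add: add_divide_distrib distrib_right)

lemma orbit_chord_nondegenerate: "g (X i) \<noteq> g (X (i + 1))"
proof
  assume "g (X i) = g (X (i + 1))"
  then obtain k :: int where "X i - X (i + 1) = of_int k" using g_eq_iff by blast
  then have "of_int k = - (real m / real n)" using X_step[of i] by simp
  moreover have "0 < real m / real n" "real m / real n < 1" using m_pos m_less_n by auto
  ultimately have "real_of_int k < 0" "real_of_int (-1) < real_of_int k" by linarith+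
  then show False unfolding of_int_less_iff by linarith
qed

lemma L_d11_orbit: "L_d11 (X i) (X (i + 1)) = alpha"
  unfolding alpha_def X_Suc_eq_shift by (subst X_eq_shift) (rule L_d11_shift)

lemma L_d12_orbit: "L_d12 (X i) (X (i + 1)) = beta"
  unfolding beta_def X_Suc_eq_shift by (subst X_eq_shift) (rule L_d12_shift)

lemma L_d22_orbit: "L_d22 (X i) (X (i + 1)) = alpha"
proof -
  \<comment> \<open>the reflection fixing the midpoint of the chord \<open>Z 0 Z 1\<close> swaps its ends\<close>
  have "of_int J / real n - X 1 = X 0" "of_int J / real n - X 0 = X 1"
    using X_midpoint X_step[of 0] by simp_all
  then have "L_d22 (X 0) (X 1) = L_d22 (of_int J / real n - X 1) (of_int J / real n - X 0)"
    by (simp only:)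
  also have "\<dots> = alpha" unfolding alpha_def by (rule L_d22_reflect)
  finally show ?thesis
    unfolding X_Suc_eq_shift by (subst X_eq_shift) (simp only: L_d22_shift)
qed

lemma cyc_next_orbit:
  assumes "1 \<le> s" and "j \<in> {1..s * n}"
  shows "cyc_next (s * n) (real (s * m)) (\<lambda>j. X (int j)) j = X (int j + 1)"
proof (cases "j = s * n")
  case True
  have "X (int (s * n) + 1) = X 1 + real s * real m"
    using X_Suc_eq_shift[of "int (s * n)"] n_ge_2 by simp
  then show ?thesis using True by (simp add: cyc_next_def cyc_succ_def)
next
  case False
  then show ?thesis by (simp add: cyc_next_def cyc_succ_def add.commute)
qed

lemma Wpq_hessian_orbit:
  assumes s: "1 \<le> s" and a: "a \<in> {1..s * n}" and b: "b \<in> {1..s * n}"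
  shows "Wpq_hessian (s * n) (real (s * m)) a b (\<lambda>j. X (int j)) = circ_matrix (s * n) alpha beta a b"
  unfolding Wpq_hessian_def sum_cyclic_tridiagonal_eq_circ_matrix[OF a b, symmetric]
  by (intro sum.cong refl) (simp only: cyc_next_orbit[OF s] L_d11_orbit L_d12_orbit L_d22_orbit)

lemma hessian_Wpq_orbit:
  assumes s: "1 \<le> s" and a: "a \<in> {1..s * n}" and b: "b \<in> {1..s * n}"
  shows "((\<lambda>t. partial (Wpq g (s * n) (real (s * m))) b ((\<lambda>j. X (int j))(a := t)))
           has_real_derivative circ_matrix (s * n) alpha beta a b) (at (X (int a)))"
  using has_real_derivative_partial_Wpq[of "s * n" a b "\<lambda>j. X (int j)" "real (s * m)"] s a b
    orbit_chord_nondegenerate cyc_next_orbit[OF s] Wpq_hessian_orbit[OF s a b] n_ge_2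
  by simp

lemma second_derivatives_of_L_orbit:
  "((\<lambda>t. deriv (\<lambda>u. Lfun g (X (i - 1)) u) t) has_real_derivative alpha) (at (X i))"
  "((\<lambda>t. deriv (\<lambda>u. Lfun g u (X (i + 1))) t) has_real_derivative alpha) (at (X i))"
  "((\<lambda>t. deriv (\<lambda>u. Lfun g u t) (X i)) has_real_derivative beta) (at (X (i + 1)))"
  using has_real_derivative_deriv_Lfun_right[of "X (i - 1)" "X i"]
    orbit_chord_nondegenerate[of "i - 1"] L_d22_orbit[of "i - 1"]
    has_real_derivative_deriv_Lfun_left[OF orbit_chord_nondegenerate[of i]] L_d11_orbit[of i]
    has_real_derivative_deriv_Lfun_mixed[OF orbit_chord_nondegenerate[of i]] L_d12_orbit[of i]
  by simp_all

text \<open>The reflection fixing the orbit maps \<open>Z 0\<close> to \<open>Z 1\<close>, and so does the rotation \<open>R\<^sup>m\<close>; hence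
  \<open>Z 0\<close> lies on the axis of an axial symmetry of the curve, where the tangent is orthogonal
  to the radius.\<close>
lemma orbit_tangent_orthogonal_radius: "g (X 0) \<bullet> g1 (X 0) = 0"
proof -
  define z v \<omega> where "z = g (X 0)" and "v = g1 (X 0)" and "\<omega> = rot (int m)"
  have "X 1 = X 0 + of_int (int m) / real n" "X 1 = of_int J / real n - X 0"
    using X_midpoint X_step[of 0] by simp_all
  then have rot_z: "\<omega> * z = rot J * cnj z" and rot_v: "\<omega> * v = - (rot J * cnj v)"
    using g_shift[of "X 0" "int m"] g_reflect_shift[of J "X 0"]
      g1_shift[of "X 0" "int m"] g1_reflect_shift[of J "X 0"]
    by (simp_all add: \<omega>_def z_def v_def)
  have "z * cnj v = (cnj \<omega> * \<omega>) * (z * cnj v)" by (simp add: \<omega>_def)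
  also have "\<dots> = (\<omega> * z) * cnj (\<omega> * v)" by (simp add: algebra_simps)
  also have "\<dots> = - ((cnj (rot J) * rot J) * (cnj z * v))" unfolding rot_z rot_v by (simp add: algebra_simps)
  also have "\<dots> = - (cnj z * v)" by simp
  finally have "Re (z * cnj v) = - Re (cnj z * v)" by simp
  moreover have "Re (z * cnj v) = Re (cnj z * v)" by simp
  ultimately show ?thesis by (simp add: z_def v_def inner_complex_eq_Re_cnj_mult)
qed

lemma chord_length_orbit: "cmod (g (X (i + 1)) - g (X i)) = cmod (g (X 1) - g (X 0))"
  unfolding X_Suc_eq_shift X_eq_shift[of i] chord_shift norm_mult norm_rot mult_1_left ..

lemma curvature_orbit: "curvature g1 g2 (X i) = curvature g1 g2 (X 0)"
proof -
  have rot_invariant: "cnj (rot j * a) * (rot j * b) = cnj a * b" for j a b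
    by (metis cnj_rot_mult_rot complex_cnj_mult mult.assoc mult.left_commute mult_1)
  show ?thesis
    unfolding curvature_def X_eq_shift[of i] g1_shift g2_shift rot_invariant norm_mult norm_rot mult_1_left ..
qed

end

section \<open>Convexity and orientation\<close>

lemma convex_open_near_contraction:
  fixes \<Omega> :: "'a::euclidean_space set"
  assumes "open \<Omega>" "convex \<Omega>" and ball: "ball 0 \<delta> \<subseteq> \<Omega>" and z: "z \<in> closure \<Omega>"
    and s: "0 < s" "s < 1" and P: "norm (P - (1 - s) *\<^sub>R z) < s * \<delta>"
  shows "P \<in> \<Omega>"
proof -
  define b where "b = (1 / s) *\<^sub>R (P - (1 - s) *\<^sub>R z)"
  have "norm b < \<delta>" using P s by (simp add: b_def divide_simps mult.commute)
  then have "b \<in> \<Omega>" using ball by auto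
  have P_eq: "P = (1 - (1 - s)) *\<^sub>R b + (1 - s) *\<^sub>R z" using s by (simp add: b_def)
  show ?thesis
  proof (cases "b = z")
    case True
    then show ?thesis using P_eq \<open>b \<in> \<Omega>\<close> by (simp flip: scaleR_add_left)
  next
    case False
    then have "P \<in> open_segment b z" unfolding in_segment using s P_eq by (intro conjI exI[of _ "1 - s"]) auto
    also have "open_segment b z \<subseteq> interior \<Omega>"
      using assms(1,2) \<open>b \<in> \<Omega>\<close> z by (intro in_interior_closure_convex_segment) (auto simp: interior_open)
    finally show ?thesis using \<open>open \<Omega>\<close> by (simp add: interior_open)
  qed
qed

text \<open>A radial step inwards from a frontier point would land inside the convex set.\<close>
lemma frontier_curve_not_radial:
  fixes g :: "real \<Rightarrow> 'a::euclidean_space"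
  assumes "open \<Omega>" "convex \<Omega>" "0 \<in> \<Omega>" and frontier: "\<And>t. g t \<in> frontier \<Omega>"
    and deriv: "(g has_vector_derivative c *\<^sub>R g x) (at x)" and "c \<noteq> 0"
  shows False
proof -
  obtain \<delta> where "\<delta> > 0" and ball: "ball 0 \<delta> \<subseteq> \<Omega>" using assms(1,3) open_contains_ball by blast
  define e where "e = \<delta> * \<bar>c\<bar> / 2"
  have "e > 0" using \<open>\<delta> > 0\<close> \<open>c \<noteq> 0\<close> by (simp add: e_def)
  then obtain d where "d > 0"
    and approx: "\<And>y. norm (y - x) < d \<Longrightarrow> norm (g y - g x - (y - x) *\<^sub>R (c *\<^sub>R g x)) \<le> e * norm (y - x)"
    using deriv unfolding has_vector_derivative_def has_derivative_at_alt by blast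
  define r where "r = min (d / 2) (1 / (2 * \<bar>c\<bar>))"
  define s where "s = r * \<bar>c\<bar>"
  define h where "h = - sgn c * r"
  have "r > 0" "r < d" using \<open>d > 0\<close> \<open>c \<noteq> 0\<close> by (auto simp: r_def)
  have "0 < s" "s < 1"
    using \<open>r > 0\<close> \<open>c \<noteq> 0\<close> by (auto simp: s_def r_def min_def field_simps)
  have "\<bar>h\<bar> = r" "h * c = - s"
    using \<open>r > 0\<close> \<open>c \<noteq> 0\<close> by (auto simp: h_def s_def abs_mult sgn_if)
  then have step: "g (x + h) - (1 - s) *\<^sub>R g x = g (x + h) - g x - (x + h - x) *\<^sub>R (c *\<^sub>R g x)"
    by (simp add: scaleR_diff_left algebra_simps)
  have "norm (x + h - x) = r" using \<open>\<bar>h\<bar> = r\<close> by simp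
  then have "norm (g (x + h) - g x - (x + h - x) *\<^sub>R (c *\<^sub>R g x)) \<le> e * norm (x + h - x)"
    using \<open>r < d\<close> by (intro approx) simp
  then have "norm (g (x + h) - (1 - s) *\<^sub>R g x) \<le> e * r"
    unfolding step \<open>norm (x + h - x) = r\<close> .
  also have "\<dots> = s * \<delta> / 2" unfolding e_def s_def by (simp add: ac_simps)
  also have "\<dots> < s * \<delta>" using \<open>0 < s\<close> \<open>\<delta> > 0\<close> by simp
  finally have "norm (g (x + h) - (1 - s) *\<^sub>R g x) < s * \<delta>" .
  moreover have "g x \<in> closure \<Omega>" using frontier[of x] by (simp add: closure_Un_frontier)
  ultimately have "g (x + h) \<in> \<Omega>"
    using convex_open_near_contraction[OF assms(1,2) ball _ \<open>0 < s\<close> \<open>s < 1\<close>] by blast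
  then show False using frontier[of "x + h"] \<open>open \<Omega>\<close> frontier_disjoint_eq by blast
qed

lemma continuous_nonvanishing_sign:
  fixes f :: "real \<Rightarrow> real"
  assumes "continuous_on UNIV f" and "\<And>t. f t \<noteq> 0" and "f x < 0"
  shows "f y < 0"
proof (rule ccontr)
  assume "\<not> f y < 0"
  then have "0 \<le> f y" by simp
  have "\<exists>t. f t = 0"
  proof (cases "x \<le> y")
    case True
    then show ?thesis
      using IVT'[of f x 0 y] assms(1,3) \<open>0 \<le> f y\<close> continuous_on_subset by fastforce
  next
    case False
    then show ?thesis
      using IVT2'[of f x 0 y] assms(1,3) \<open>0 \<le> f y\<close> continuous_on_subset by fastforce
  qed
  then show False using assms(2) by blast
qed

locale convex_dihedral_curve = dihedral_curve +
  fixes \<Omega> :: "complex set"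
  assumes g1_nonzero: "\<And>x. g1 x \<noteq> 0"
    and strictly_convex: "strictly_convex_domain \<Omega>"
    and frontier_eq: "frontier \<Omega> = range g"
    and winding_number_eq_1: "\<And>z. z \<in> \<Omega> \<Longrightarrow> winding_number g z = 1"
begin

lemma open_domain: "open \<Omega>" and convex_domain: "convex \<Omega>"
  using strictly_convex by (auto simp: strictly_convex_domain_def)

text \<open>The centre of mass of the \<open>n\<close> rotated copies of a boundary point is \<open>0\<close>.\<close>
lemma zero_in_domain: "0 \<in> \<Omega>"
proof -
  have "(\<Sum>j<n. (1 / real n) *\<^sub>R (rot (int j) * g 0)) = (\<Sum>j<n. rot (int j)) * (g 0 / of_nat n)"
    by (simp add: scaleR_conv_of_real sum_distrib_right sum_divide_distrib)
  also have "\<dots> = 0" by (simp add: sum_rot_eq_0)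
  finally have "0 = (\<Sum>j<n. (1 / real n) *\<^sub>R (rot (int j) * g 0))" ..
  also have "\<dots> \<in> closure \<Omega>"
  proof (rule convex_sum)
    fix j assume "j \<in> {..<n}"
    have "rot (int j) * g 0 = g (0 + real j / real n)" using g_shift_nat[of 0 j] by simp
    then show "rot (int j) * g 0 \<in> closure \<Omega>" using frontier_eq closure_Un_frontier by auto
  qed (use convex_domain n_ge_2 in \<open>auto intro: convex_closure\<close>)
  finally show ?thesis
    using frontier_eq g_nonzero closure_Un_frontier by (metis UnE imageE)
qed

lemma velocity_not_radial: "Im (g1 x * cnj (g x)) \<noteq> 0"
proof
  assume Im0: "Im (g1 x * cnj (g x)) = 0"
  define c where "c = Re (g1 x * cnj (g x)) / (cmod (g x))\<^sup>2"
  have "g1 x * cnj (g x) = of_real (Re (g1 x * cnj (g x)))" using Im0 by (simp add: complex_eq_iff)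
  then have "g1 x * (g x * cnj (g x)) = of_real (Re (g1 x * cnj (g x))) * g x"
    by (metis mult.commute mult.left_commute)
  then have "g1 x = c *\<^sub>R g x"
    using g_nonzero[of x] by (simp add: c_def scaleR_conv_of_real field_simps flip: complex_norm_square)
  moreover have "c \<noteq> 0" using calculation g1_nonzero[of x] by auto
  ultimately show False
    using frontier_curve_not_radial[OF open_domain convex_domain zero_in_domain, of g]
      has_derivative_g[of x] frontier_eq by auto
qed

lemma valid_path_g: "valid_path g"
  unfolding valid_path_def
proof (rule C1_differentiable_imp_piecewise, unfold C1_differentiable_on_eq, intro conjI ballI)
  show "g differentiable at x" for x using has_derivative_g[of x] by (rule differentiableI_vector)
  have "vector_derivative g (at x) = g1 x" for x using has_derivative_g by (rule vector_derivative_at)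
  then show "continuous_on {0..1} (\<lambda>x. vector_derivative g (at x))"
    using continuous_on_subset[OF continuous_on_g1] by simp
qed

text \<open>Counterclockwise orientation: \<open>g\<close> winds once positively around the interior point \<open>0\<close>,
  while a clockwise velocity everywhere would make the reversed path wind positively.\<close>
lemma velocity_positively_oriented: "Im (g1 x * cnj (g x)) > 0"
proof (rule ccontr)
  define f where "f x = Im (g1 x * cnj (g x))" for x
  have cont: "continuous_on UNIV f"
    unfolding f_def by (intro continuous_intros continuous_on_g continuous_on_g1)
  assume "\<not> Im (g1 x * cnj (g x)) > 0"
  then have "f x < 0" using velocity_not_radial[of x] by (simp add: f_def)
  then have neg: "f y < 0" for y
    using continuous_nonvanishing_sign[OF cont] velocity_not_radial by (auto simp: f_def)
  have "continuous_on {0..1} (\<lambda>t. - f t)"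
    using continuous_on_subset[OF cont] by (intro continuous_on_minus) auto
  then obtain t0 where t0: "\<And>y. y \<in> {0..1} \<Longrightarrow> - f t0 \<le> - f y"
    using continuous_attains_inf[OF compact_Icc] by (metis atLeastAtMost_iff empty_iff zero_le_one)
  have reverse_velocity: "vector_derivative (reversepath g) (at y) = - g1 (1 - y)" for y
  proof (rule vector_derivative_at)
    show "(reversepath g has_vector_derivative - g1 (1 - y)) (at y)"
      using has_vector_derivative_affine_comp[of g "g1 (1 + (-1) * y)" 1 "-1" y] has_derivative_g
      by (simp add: reversepath_def)
  qed
  have "0 < Re (winding_number (reversepath g) 0)"
  proof (rule winding_number_pos_lt)
    show "valid_path (reversepath g)" using valid_path_g by simp
    show "0 \<notin> path_image (reversepath g)" using g_nonzero by (auto simp: path_image_def reversepath_def)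
    show "0 < - f t0" using neg[of t0] by simp
    show "- f t0 \<le> Im (vector_derivative (reversepath g) (at y) * cnj (reversepath g y - 0))"
      if "0 < y" "y < 1" for y
      using t0[of "1 - y"] that unfolding reverse_velocity by (simp add: f_def reversepath_def)
  qed
  moreover have "0 \<notin> path_image g" using g_nonzero by (auto simp: path_image_def)
  then have "winding_number (reversepath g) 0 = - 1"
    using winding_number_reversepath[OF valid_path_imp_path[OF valid_path_g]]
      winding_number_eq_1[OF zero_in_domain] by simp
  ultimately show False by simp
qed

end

section \<open>Constant speed\<close>

lemma norm_1_minus_cis_double:
  assumes "sin \<phi> > 0"
  shows "cmod (1 - cis (2 * \<phi>)) = 2 * sin \<phi>"
proof -
  have "cmod (1 - cis (2 * \<phi>)) ^ 2 = (1 - cos (2 * \<phi>))^2 + sin (2 * \<phi>)^2"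
    by (simp add: cmod_power2)
  also have "\<dots> = 4 * sin \<phi> ^ 2 * (sin \<phi> ^ 2 + cos \<phi> ^ 2)"
    unfolding cos_double_sin sin_double
    by (simp add: power2_eq_square algebra_simps del: sin_cos_squared_add sin_cos_squared_add2 sin_cos_squared_add3)
  also have "\<dots> = (2 * sin \<phi>)^2" by (simp add: power_mult_distrib)
  finally show ?thesis
    using assms by (metis norm_ge_zero power2_eq_imp_eq mult_nonneg_nonneg zero_le_numeral less_imp_le)
qed

lemma rotation_chord_inner_products:
  fixes z v w \<omega> :: complex
  assumes \<omega>: "\<omega> = cis (2 * \<phi>)"
    and v: "cnj z * v = \<i> * of_real \<tau>" and "cmod v = c" and w: "cnj z * w = of_real \<sigma>"
  shows "(z - \<omega> * z) \<bullet> v = - \<tau> * sin (2 * \<phi>)"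
    and "(z - \<omega> * z) \<bullet> w = \<sigma> * (1 - cos (2 * \<phi>))"
    and "(\<omega> * z - z) \<bullet> (\<omega> * v) = \<tau> * sin (2 * \<phi>)"
    and "v \<bullet> v = c^2"
    and "v \<bullet> (\<omega> * v) = c^2 * cos (2 * \<phi>)"
proof -
  have "cnj (z - \<omega> * z) * v = (1 - cnj \<omega>) * (cnj z * v)" by (simp add: algebra_simps)
  then have "(z - \<omega> * z) \<bullet> v = Re ((1 - cnj \<omega>) * (\<i> * of_real \<tau>))"
    by (simp only: inner_complex_eq_Re_cnj_mult v)
  then show "(z - \<omega> * z) \<bullet> v = - \<tau> * sin (2 * \<phi>)" by (simp add: \<omega> algebra_simps)
  have "cnj (z - \<omega> * z) * w = (1 - cnj \<omega>) * (cnj z * w)" by (simp add: algebra_simps)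
  then have "(z - \<omega> * z) \<bullet> w = Re ((1 - cnj \<omega>) * of_real \<sigma>)"
    by (simp only: inner_complex_eq_Re_cnj_mult w)
  then show "(z - \<omega> * z) \<bullet> w = \<sigma> * (1 - cos (2 * \<phi>))" by (simp add: \<omega> algebra_simps)
  have "cnj \<omega> * \<omega> = 1" using \<omega> by (simp add: cis_cnj cis_mult)
  moreover have "cnj (\<omega> * z - z) * (\<omega> * v) = (cnj \<omega> * \<omega> - \<omega>) * (cnj z * v)" by (simp add: algebra_simps)
  ultimately have "(\<omega> * z - z) \<bullet> (\<omega> * v) = Re ((1 - \<omega>) * (\<i> * of_real \<tau>))"
    by (simp only: inner_complex_eq_Re_cnj_mult v)
  then show "(\<omega> * z - z) \<bullet> (\<omega> * v) = \<tau> * sin (2 * \<phi>)" by (simp add: \<omega> algebra_simps)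
  show "v \<bullet> v = c^2" using \<open>cmod v = c\<close> by (simp add: power2_norm_eq_inner[symmetric])
  have "v * cnj v = of_real (c^2)" using complex_norm_square[of v] \<open>cmod v = c\<close> by simp
  then have "cnj v * (\<omega> * v) = \<omega> * of_real (c^2)" by (metis mult.commute mult.left_commute)
  then have "v \<bullet> (\<omega> * v) = Re (\<omega> * of_real (c^2))" by (simp only: inner_complex_eq_Re_cnj_mult)
  then show "v \<bullet> (\<omega> * v) = c^2 * cos (2 * \<phi>)" by (simp add: \<omega>)
qed

text \<open>\<open>\<partial>\<^sub>1\<^sub>1L\<close> and \<open>\<partial>\<^sub>1\<^sub>2L\<close> on the chord from \<open>z\<close> to \<open>\<omega> z\<close>: the hypotheses say that the velocity \<open>v\<close>
  at \<open>z\<close> is orthogonal to \<open>z\<close> and of length \<open>c\<close>, and that the acceleration \<open>w\<close> is normal with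
  curvature \<open>\<kappa>\<close>.\<close>
lemma rotation_chord_hessian_entries:
  fixes z v w \<omega> :: complex and c \<tau> \<kappa> \<phi> :: real
  assumes \<omega>: "\<omega> = cis (2 * \<phi>)" and sin: "sin \<phi> > 0" and "z \<noteq> 0"
    and v: "cnj z * v = \<i> * of_real \<tau>" and \<tau>: "\<tau> = cmod z * c" and "cmod v = c"
    and w: "cnj z * w = of_real (- \<kappa> * c * \<tau>)"
  shows "(v \<bullet> v + (z - \<omega> * z) \<bullet> w) / cmod (z - \<omega> * z) - ((z - \<omega> * z) \<bullet> v)^2 / cmod (z - \<omega> * z)^3
          = c^2 * sin \<phi> * (sin \<phi> / cmod (\<omega> * z - z) - \<kappa>)"
    and "- (v \<bullet> (\<omega> * v)) / cmod (z - \<omega> * z)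
           - ((z - \<omega> * z) \<bullet> v) * ((\<omega> * z - z) \<bullet> (\<omega> * v)) / cmod (z - \<omega> * z)^3
          = c^2 * sin \<phi> ^ 2 / cmod (\<omega> * z - z)"
proof -
  note inner = rotation_chord_inner_products[OF \<omega> v \<open>cmod v = c\<close> w]
  define r where "r = cmod z"
  have "r > 0" using \<open>z \<noteq> 0\<close> by (simp add: r_def)
  have chord: "cmod (z - \<omega> * z) = 2 * sin \<phi> * r"
  proof -
    have "z - \<omega> * z = (1 - \<omega>) * z" by (simp add: algebra_simps)
    then show ?thesis using norm_1_minus_cis_double[OF sin] \<omega> by (simp add: norm_mult r_def)
  qed
  have chord': "cmod (\<omega> * z - z) = 2 * sin \<phi> * r" using chord by (simp add: norm_minus_commute)
  have "sin \<phi> \<noteq> 0" using sin by simp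
  have cos2: "cos \<phi> ^ 2 = 1 - sin \<phi> ^ 2" by (rule cos_squared_eq)
  show "(v \<bullet> v + (z - \<omega> * z) \<bullet> w) / cmod (z - \<omega> * z) - ((z - \<omega> * z) \<bullet> v)^2 / cmod (z - \<omega> * z)^3
          = c^2 * sin \<phi> * (sin \<phi> / cmod (\<omega> * z - z) - \<kappa>)"
    unfolding inner chord chord' \<tau> r_def[symmetric] cos_double_sin sin_double
    using \<open>r > 0\<close> \<open>sin \<phi> \<noteq> 0\<close>
    by (simp add: field_simps power2_eq_square power3_eq_cube) (use cos2 in algebra)
  show "- (v \<bullet> (\<omega> * v)) / cmod (z - \<omega> * z)
           - ((z - \<omega> * z) \<bullet> v) * ((\<omega> * z - z) \<bullet> (\<omega> * v)) / cmod (z - \<omega> * z)^3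
          = c^2 * sin \<phi> ^ 2 / cmod (\<omega> * z - z)"
    unfolding inner chord chord' \<tau> r_def[symmetric] cos_double_sin sin_double
    using \<open>r > 0\<close> \<open>sin \<phi> \<noteq> 0\<close>
    by (simp add: field_simps power2_eq_square power3_eq_cube) (use cos2 in algebra)
qed

locale symmetric_billiard_orbit = symmetric_orbit + convex_dihedral_curve
begin

lemma hessian_entries_constant_speed:
  assumes speed: "\<And>x. cmod (g1 x) = c"
  defines "\<phi> \<equiv> real m * pi / real n"
  shows "alpha = c^2 * sin \<phi> * (sin \<phi> / cmod (g (X 1) - g (X 0)) - curvature g1 g2 (X 0))"
    and "beta = c^2 * sin \<phi> ^ 2 / cmod (g (X 1) - g (X 0))"
proof -
  define z v w \<omega> \<tau> \<kappa> where "z = g (X 0)" and "v = g1 (X 0)" and "w = g2 (X 0)"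
    and "\<omega> = rot (int m)" and "\<tau> = Im (cnj z * v)" and "\<kappa> = curvature g1 g2 (X 0)"
  have "X 1 = X 0 + of_int (int m) / real n" using X_step[of 0] by simp
  then have gX1: "g (X 1) = \<omega> * z" and g1X1: "g1 (X 1) = \<omega> * v"
    using g_shift[of "X 0" "int m"] g1_shift[of "X 0" "int m"] by (simp_all add: \<omega>_def z_def v_def)
  have \<omega>: "\<omega> = cis (2 * \<phi>)" by (simp add: \<omega>_def rot_def \<phi>_def ac_simps)
  have "0 < \<phi>" "\<phi> < pi" using m_pos m_less_n by (auto simp: \<phi>_def field_simps)
  then have sin: "sin \<phi> > 0" by (rule sin_gt_zero)
  have "cmod v = c" using speed by (simp add: v_def)
  then have "c > 0" using g1_nonzero[of "X 0"] by (auto simp: v_def)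
  have zv: "cnj z * v = \<i> * of_real \<tau>"
    using orbit_tangent_orthogonal_radius by (simp add: complex_eq_iff \<tau>_def z_def v_def inner_complex_def)
  have "\<tau> > 0" using velocity_positively_oriented[of "X 0"] by (simp add: \<tau>_def z_def v_def mult.commute)
  moreover have "cmod (cnj z * v) = cmod z * c" using \<open>cmod v = c\<close> by (simp add: norm_mult)
  ultimately have \<tau>: "\<tau> = cmod z * c" using zv by (simp add: norm_mult)
  have vw: "cnj v * w = \<i> * of_real (\<kappa> * c^3)"
    using constant_speed_orthogonal[OF speed, of "X 0"] \<open>cmod v = c\<close> \<open>c > 0\<close>
    by (simp add: complex_eq_iff \<kappa>_def curvature_def v_def w_def inner_complex_def)
  have "cnj v * v = of_real (c^2)" using complex_norm_square[of v] \<open>cmod v = c\<close> by (simp add: mult.commute)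
  then have "(cnj z * w) * of_real (c^2) = (cnj z * v) * (cnj v * w)" by (metis mult.commute mult.left_commute)
  also have "\<dots> = of_real (- \<kappa> * c * \<tau>) * of_real (c^2)"
    unfolding zv vw by (simp add: algebra_simps power2_eq_square power3_eq_cube)
  finally have zw: "cnj z * w = of_real (- \<kappa> * c * \<tau>)"
    using \<open>c > 0\<close> by (subst (asm) mult_cancel_right) simp
  have "z \<noteq> 0" using g_nonzero by (simp add: z_def)
  note entries = rotation_chord_hessian_entries[OF \<omega> sin \<open>z \<noteq> 0\<close> zv \<tau> \<open>cmod v = c\<close> zw]
  have chord: "cmod (\<omega> * z - z) = cmod (g (X 1) - g (X 0))" by (simp add: gX1 z_def)
  show "alpha = c^2 * sin \<phi> * (sin \<phi> / cmod (g (X 1) - g (X 0)) - curvature g1 g2 (X 0))"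
    using entries(1) unfolding alpha_def L_d11_def gX1 chord by (simp add: z_def v_def w_def \<kappa>_def)
  show "beta = c^2 * sin \<phi> ^ 2 / cmod (g (X 1) - g (X 0))"
    using entries(2) unfolding beta_def L_d12_def gX1 g1X1 chord by (simp add: z_def v_def)
qed

end

lemma Dn_billiard_param_convex_dihedral_curve:
  assumes "Dn_billiard_param n \<gamma> \<gamma>1 \<gamma>2" and "2 \<le> n"
  obtains \<Omega> where "convex_dihedral_curve \<gamma> \<gamma>1 \<gamma>2 n \<Omega>"
  using assms unfolding Dn_billiard_param_def
  by (metis C2_curve.intro convex_dihedral_curve.intro convex_dihedral_curve_axioms.intro
      dihedral_curve.intro dihedral_curve_axioms.intro plane_C2_curve_def)

theorem mainTheorem17:
  fixes m n s :: nat
    and \<gamma> \<gamma>1 \<gamma>2 :: "real \<Rightarrow> complex"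
    and Z :: "int \<Rightarrow> complex" and X :: "int \<Rightarrow> real"
  assumes "coprime m n" and "1 \<le> m" and "m \<le> n - 1"
    and "Dn_billiard_param n \<gamma> \<gamma>1 \<gamma>2"
    and "billiard_orbit \<gamma> \<gamma>1 Z X"
    and "Dn_symmetric_orbit n Z"
    and "birkhoff X"
    and "X \<in> XX (int n) (real m)"
    and "1 \<le> s"
  shows "let p = s * n; q = real (s * m); Xv = (\<lambda>j::nat. X (int j))
         in \<exists>\<alpha> \<beta>.
           (\<forall>i. ((\<lambda>t. deriv (\<lambda>u. Lfun \<gamma> (X (i - 1)) u) t) has_real_derivative \<alpha>) (at (X i))
              \<and> ((\<lambda>t. deriv (\<lambda>u. Lfun \<gamma> u (X (i + 1))) t) has_real_derivative \<alpha>) (at (X i))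
              \<and> ((\<lambda>t. deriv (\<lambda>u. Lfun \<gamma> u t) (X i)) has_real_derivative \<beta>) (at (X (i + 1))))
         \<and> (\<forall>a\<in>{1..p}. \<forall>b\<in>{1..p}.
              ((\<lambda>t. partial (Wpq \<gamma> p q) b (Xv(a := t))) has_real_derivative circ_matrix p \<alpha> \<beta> a b) (at (Xv a)))
         \<and> (\<forall>N::int. \<forall>a\<in>{1..p}.
              (\<Sum>b = 1..p. circ_matrix p \<alpha> \<beta> a b * sin (2 * pi * real_of_int N * real b / real p))
                = (2 * \<alpha> + 2 * \<beta> * cos (2 * pi * real_of_int N / real p)) * sin (2 * pi * real_of_int N * real a / real p)
            \<and> (\<Sum>b = 1..p. circ_matrix p \<alpha> \<beta> a b * cos (2 * pi * real_of_int N * real b / real p))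
                = (2 * \<alpha> + 2 * \<beta> * cos (2 * pi * real_of_int N / real p)) * cos (2 * pi * real_of_int N * real a / real p))
         \<and> (\<forall>c. (\<forall>x. cmod (\<gamma>1 x) = c) \<longrightarrow>
              (\<forall>i j. cmod (Z (i + 1) - Z i) = cmod (Z (j + 1) - Z j)
                     \<and> curvature \<gamma>1 \<gamma>2 (X i) = curvature \<gamma>1 \<gamma>2 (X j))
            \<and> (\<forall>i. \<alpha> = c^2 * sin (real m * pi / real n)
                        * (sin (real m * pi / real n) / cmod (Z (i + 1) - Z i) - curvature \<gamma>1 \<gamma>2 (X i))
                 \<and> \<beta> = c^2 * sin (real m * pi / real n) ^ 2 / cmod (Z (i + 1) - Z i)))"
proof -
  have "2 \<le> n" using assms(2,3) by linarith
  then obtain \<Omega> where "convex_dihedral_curve \<gamma> \<gamma>1 \<gamma>2 n \<Omega>"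
    using Dn_billiard_param_convex_dihedral_curve[OF assms(4)] by blast
  then interpret convex_dihedral_curve \<gamma> \<gamma>1 \<gamma>2 n \<Omega> .
  have gX: "\<And>i. \<gamma> (X i) = Z i" using assms(5) unfolding billiard_orbit_def by blast
  obtain J where lin: "\<And>i. X i = X 0 + of_int i * real m / real n"
    and mid: "2 * X 0 + real m / real n = of_int J / real n"
    using symmetric_birkhoff_orbit[OF gX assms(6,7,8)] by blast
  interpret symmetric_billiard_orbit \<gamma> \<gamma>1 \<gamma>2 n X m J \<Omega>
  proof unfold_locales
    show "0 < m" "m < n" using assms(2,3) \<open>2 \<le> n\<close> by auto
  qed (fact lin mid)+
  have chord: "cmod (Z (i + 1) - Z i) = cmod (\<gamma> (X 1) - \<gamma> (X 0))" for i
    using chord_length_orbit[of i] gX by simp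
  show ?thesis
    unfolding Let_def
  proof (rule exI[of _ alpha], rule exI[of _ beta], intro conjI allI ballI impI)
    show "cmod (Z (i + 1) - Z i) = cmod (Z (j + 1) - Z j)" for i j
      using chord[of i] chord[of j] by (rule trans[OF _ sym])
    show "curvature \<gamma>1 \<gamma>2 (X i) = curvature \<gamma>1 \<gamma>2 (X j)" for i j
      using curvature_orbit[of i] curvature_orbit[of j] by (rule trans[OF _ sym])
    show "alpha = c\<^sup>2 * sin (real m * pi / real n)
        * (sin (real m * pi / real n) / cmod (Z (i + 1) - Z i) - curvature \<gamma>1 \<gamma>2 (X i))"
      "beta = c\<^sup>2 * sin (real m * pi / real n) ^ 2 / cmod (Z (i + 1) - Z i)"
      if "\<forall>x. cmod (\<gamma>1 x) = c" for c i
      using hessian_entries_constant_speed[of c] that unfolding chord curvature_orbit[of i] by blast+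
  qed (fact second_derivatives_of_L_orbit hessian_Wpq_orbit[OF assms(9)] circ_matrix_trig_eigenvectors)+
qed

end
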